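(* Let $\Theta$ be a modular action theory and $\Phi$ a law. Then $\Theta'\cup\{\Phi\}\models_{PDL}\Theta$ for all $\Theta'\in\Theta\ominus\Phi$.
   Context: Fix a finite set $\mathrm{Act}$ of atomic actions and a finite set $\mathrm{Prop}$ of atoms; $\mathrm{Lit}$ is the set of literals. Boolean formulas are classical propositional formulas over $\mathrm{Prop}$, $\models_{CPL}$ classical consequence. Modal formulas are built from Boolean ones with the Boolean connectives and $[a]$ ($a\in\mathrm{Act}$); $\langle a\rangle\Phi:=\neg[a]\neg\Phi$. A PDL-model is $\langle W,R\rangle$, $W$ a set of valuations (maximal consistent sets of literals), $R_a\subseteq W\times W$; truth is standard; a model satisfies a formula iff it holds at all worlds; $\Sigma\models_{PDL}\Phi$ iff every model of $\Sigma$ is a model of $\Phi$, and $\Sigma\models_{PDL}\Theta$ means $\Sigma\models_{PDL}\Phi$ for each $\Phi\in\Theta$. A static law is a Boolean formula; an effect law for $a$ is $\varphi\to[a]\psi$; an executability law for $a$ is $\varphi\to\langle a\rangle\top$; a law is any of these. An action theory is a finite set $\Theta=S\cup E\cup X$ of static, effect, executability laws; $E_a,X_a$ those about $a$. $\Theta$ is modular iff for every Boolean $\varphi$, $\Theta\models_{PDL}\varphi$ implies $S\models_{CPL}\varphi$. Syntactic contraction $\Theta\ominus\Phi$ (a set of theories). $IP(\chi)$: prime implicants of $\chi$; $\bigwedge S$: conjunction of $S$; $\mathrm{atm}(\tau)$: atoms of the term $\tau$; for $A\subseteq\mathrm{Prop}\setminus\mathrm{atm}(\tau)$, $\varphi_A:=\bigwedge_{p\in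 A}p\wedge\bigwedge_{p\in\mathrm{Prop}\setminus(\mathrm{atm}(\tau)\cup A)}\neg p$. (1) $\Phi=\varphi\to\langle a\rangle\top$: if $\Theta\not\models_{PDL}\Phi$, result $\{\Theta\}$; else the theories $(\Theta\setminus X_a)\cup\{(\varphi_i\wedge\neg(\tau\wedge\varphi_A))\to\langle a\rangle\top:\varphi_i\to\langle a\rangle\top\in X_a\}$ for $\tau\in IP(\bigwedge S\wedge\varphi)$, $A\subseteq\mathrm{Prop}\setminus\mathrm{atm}(\tau)$ with $S\not\models_{CPL}\neg(\tau\wedge\varphi_A)$. (2) $\Phi=\varphi\to[a]\psi$: if $\Theta\not\models_{PDL}\Phi$, result $\{\Theta\}$; else let $E^-_a$ be the union of all minimal $E'\subseteq E_a$ with $S\cup E'\models_{PDL}\Phi$; for $\tau,A$ as in (1) and $\tau'\in IP(\bigwedge S\wedge\neg\psi)$ the result contains $(\Theta\setminus E^-_a)\cup\{(\varphi_i\wedge\neg(\tau\wedge\varphi_A))\to[a]\psi_i\}\cup\{(\varphi_i\wedge\tau\wedge\varphi_A)\to[a](\psi_i\vee\tau')\}$ (over $\varphi_i\to[a]\psi_i\in E^-_a$) $\cup\{(\tau\wedge\varphi_A\wedge\ell)\to[a](\psi\vee\ell):\ell\in L$ for some $L\subseteq\mathrm{Lit}$ with $S\models_{CPL}(\tau\wedge\varphi_A)\to\bigwedge L$, $S\not\models_{CPL}\neg(\tau'\wedge\bigwedge L)$, and ($\Theta\not\models_{PDL}(\tau\wedge\varphi_A\wedge\ell)\to[a]\neg\ell$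 or $\ell\in\tau'$)$\}$. (3) $\Phi=\varphi$ Boolean: if $S\not\models_{CPL}\varphi$, result $\{\Theta\}$; else for each $S^-\in S\ominus\varphi$ (a given classical contraction operator, assumed Katsuno–Mendelzon-like, $S\models_{CPL}\bigwedge S^-$, sound, complete and minimal w.r.t. its semantics) the theory obtained from $(\Theta\setminus S)\cup S^-$ by replacing each $X_a$ with $\{(\varphi_i\wedge\varphi)\to\langle a\rangle\top:\varphi_i\to\langle a\rangle\top\in X_a\}$ and adding $\neg\varphi\to[a]\bot$ for each $a$. *)

theory Defs
  imports Main
begin

datatype ('p, 'a) fm =
    Atom 'p | Top | Bot | Neg "('p, 'a) fm"
  | Conj "('p, 'a) fm" "('p, 'a) fm" | Disj "('p, 'a) fm" "('p, 'a) fm"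
  | Imp "('p, 'a) fm" "('p, 'a) fm" | Box 'a "('p, 'a) fm"

definition Dia :: "'a \<Rightarrow> ('p, 'a) fm \<Rightarrow> ('p, 'a) fm" where
  "Dia a f = Neg (Box a (Neg f))"

fun is_bool :: "('p, 'a) fm \<Rightarrow> bool" where
  "is_bool (Atom p) = True"
| "is_bool Top = True"
| "is_bool Bot = True"
| "is_bool (Neg f) = is_bool f"
| "is_bool (Conj f g) = (is_bool f \<and> is_bool g)"
| "is_bool (Disj f g) = (is_bool f \<and> is_bool g)"
| "is_bool (Imp f g) = (is_bool f \<and> is_bool g)"
| "is_bool (Box a f) = False"

text \<open>Literals: (p, True) is p, (p, False) is the negation of p.\<close>
type_synonym 'p lit = "'p \<times> bool"

definition lit_fm :: "'p lit \<Rightarrow> ('p, 'a) fm" where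
  "lit_fm l = (if snd l then Atom (fst l) else Neg (Atom (fst l)))"

fun Conjs :: "('p, 'a) fm list \<Rightarrow> ('p, 'a) fm" where
  "Conjs [] = Top"
| "Conjs (f # fs) = Conj f (Conjs fs)"

definition BigConj :: "('p, 'a) fm set \<Rightarrow> ('p, 'a) fm" where
  "BigConj F = Conjs (SOME xs. set xs = F)"

definition lits_conj :: "'p lit set \<Rightarrow> ('p, 'a) fm" where
  "lits_conj L = BigConj (lit_fm ` L)"

text \<open>A valuation (maximal consistent set of literals) is represented by
the set of atoms it makes true.\<close>
type_synonym 'p valuation = "'p set"

type_synonym ('p, 'a) model = "'p valuation set \<times> ('a \<Rightarrow> ('p valuation \<times> 'p valuation) set)"

definition is_model :: "('p, 'a) model \<Rightarrow> bool" where
  "is_model M = (\<forall>a. snd M a \<subseteq> fst M \<times> fst M)"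

fun sat :: "('p, 'a) model \<Rightarrow> 'p valuation \<Rightarrow> ('p, 'a) fm \<Rightarrow> bool" where
  "sat M w (Atom p) = (p \<in> w)"
| "sat M w Top = True"
| "sat M w Bot = False"
| "sat M w (Neg f) = (\<not> sat M w f)"
| "sat M w (Conj f g) = (sat M w f \<and> sat M w g)"
| "sat M w (Disj f g) = (sat M w f \<or> sat M w g)"
| "sat M w (Imp f g) = (sat M w f \<longrightarrow> sat M w g)"
| "sat M w (Box a f) = (\<forall>w'. (w, w') \<in> snd M a \<longrightarrow> sat M w' f)"

definition valid_in :: "('p, 'a) model \<Rightarrow> ('p, 'a) fm \<Rightarrow> bool" where
  "valid_in M f = (\<forall>w\<in>fst M. sat M w f)"

text \<open>PDL consequence (global).\<close>
definition pdl_ent :: "('p, 'a) fm set \<Rightarrow> ('p, 'a) fm \<Rightarrow> bool" where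
  "pdl_ent \<Sigma> f = (\<forall>M. is_model M \<longrightarrow> (\<forall>g\<in>\<Sigma>. valid_in M g) \<longrightarrow> valid_in M f)"

definition pdl_ents :: "('p, 'a) fm set \<Rightarrow> ('p, 'a) fm set \<Rightarrow> bool" where
  "pdl_ents \<Sigma> \<Theta> = (\<forall>f\<in>\<Theta>. pdl_ent \<Sigma> f)"

text \<open>Classical truth of a Boolean formula under a valuation
(Box is never used on Boolean formulas).\<close>
definition bsat :: "'p valuation \<Rightarrow> ('p, 'a) fm \<Rightarrow> bool" where
  "bsat v f = sat ({v}, \<lambda>_. {}) v f"

definition cmodels :: "('p, 'a) fm set \<Rightarrow> 'p valuation set" where
  "cmodels S = {v. \<forall>g\<in>S. bsat v g}"

definition cpl_ent :: "('p, 'a) fm set \<Rightarrow> ('p, 'a) fm \<Rightarrow> bool" where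
  "cpl_ent S f = (\<forall>v. v \<in> cmodels S \<longrightarrow> bsat v f)"

definition is_static :: "('p, 'a) fm \<Rightarrow> bool" where
  "is_static f = is_bool f"

definition is_effect :: "'a \<Rightarrow> ('p, 'a) fm \<Rightarrow> bool" where
  "is_effect a f = (\<exists>\<phi> \<psi>. is_bool \<phi> \<and> is_bool \<psi> \<and> f = Imp \<phi> (Box a \<psi>))"

definition is_exec :: "'a \<Rightarrow> ('p, 'a) fm \<Rightarrow> bool" where
  "is_exec a f = (\<exists>\<phi>. is_bool \<phi> \<and> f = Imp \<phi> (Dia a Top))"

definition is_law :: "('p, 'a) fm \<Rightarrow> bool" where
  "is_law f = (is_static f \<or> (\<exists>a. is_effect a f) \<or> (\<exists>a. is_exec a f))"

definition action_theory :: "('p, 'a) fm set \<Rightarrow> bool" where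
  "action_theory \<Theta> = (finite \<Theta> \<and> (\<forall>f\<in>\<Theta>. is_law f))"

definition Stat :: "('p, 'a) fm set \<Rightarrow> ('p, 'a) fm set" where
  "Stat \<Theta> = {f\<in>\<Theta>. is_static f}"

definition Eff :: "'a \<Rightarrow> ('p, 'a) fm set \<Rightarrow> ('p, 'a) fm set" where
  "Eff a \<Theta> = {f\<in>\<Theta>. is_effect a f}"

definition Exe :: "'a \<Rightarrow> ('p, 'a) fm set \<Rightarrow> ('p, 'a) fm set" where
  "Exe a \<Theta> = {f\<in>\<Theta>. is_exec a f}"

definition modular :: "('p, 'a) fm set \<Rightarrow> bool" where
  "modular \<Theta> = (\<forall>\<phi>. is_bool \<phi> \<longrightarrow> pdl_ent \<Theta> \<phi> \<longrightarrow> cpl_ent (Stat \<Theta>) \<phi>)"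

text \<open>A term is a consistent set of literals (finite, as the set of atoms is finite).\<close>
definition is_term :: "'p lit set \<Rightarrow> bool" where
  "is_term t = (finite t \<and> (\<forall>p. \<not> ((p, True) \<in> t \<and> (p, False) \<in> t)))"

definition implies_c :: "('p, 'a) fm \<Rightarrow> ('p, 'a) fm \<Rightarrow> bool" where
  "implies_c f g = cpl_ent {f} g"

definition IP :: "('p, 'a) fm \<Rightarrow> 'p lit set set" where
  "IP \<chi> = {t. is_term t \<and> implies_c (lits_conj t :: ('p, 'a) fm) \<chi> \<and>
              (\<forall>t'. t' \<subset> t \<longrightarrow> \<not> implies_c (lits_conj t' :: ('p, 'a) fm) \<chi>)}"

definition atm :: "'p lit set \<Rightarrow> 'p set" where
  "atm t = fst ` t"

definition phiA :: "'p lit set \<Rightarrow> 'p set \<Rightarrow> ('p, 'a) fm" where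
  "phiA t A = lits_conj ((\<lambda>p. (p, True)) ` A \<union> (\<lambda>p. (p, False)) ` (UNIV - (atm t \<union> A)))"

definition tauA :: "'p lit set \<Rightarrow> 'p set \<Rightarrow> ('p, 'a) fm" where
  "tauA t A = Conj (lits_conj t) (phiA t A)"

definition contr_exe :: "('p::finite, 'a) fm set \<Rightarrow> 'a \<Rightarrow> ('p, 'a) fm \<Rightarrow> ('p, 'a) fm set set" where
  "contr_exe \<Theta> a \<phi> =
    (if \<not> pdl_ent \<Theta> (Imp \<phi> (Dia a Top)) then {\<Theta>}
     else {(\<Theta> - Exe a \<Theta>) \<union>
             {Imp (Conj \<phi>i (Neg (tauA t A))) (Dia a Top) | \<phi>i. Imp \<phi>i (Dia a Top) \<in> Exe a \<Theta>}
          | t A. t \<in> IP (Conj (BigConj (Stat \<Theta>)) \<phi>) \<and> A \<subseteq> UNIV - atm t \<and>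
                 \<not> cpl_ent (Stat \<Theta>) (Neg (tauA t A))})"

definition Eminus :: "('p, 'a) fm set \<Rightarrow> 'a \<Rightarrow> ('p, 'a) fm \<Rightarrow> ('p, 'a) fm set" where
  "Eminus \<Theta> a \<Phi> = \<Union>{E'. E' \<subseteq> Eff a \<Theta> \<and> pdl_ent (Stat \<Theta> \<union> E') \<Phi> \<and>
                        (\<forall>E''. E'' \<subset> E' \<longrightarrow> \<not> pdl_ent (Stat \<Theta> \<union> E'') \<Phi>)}"

definition contr_eff :: "('p::finite, 'a) fm set \<Rightarrow> 'a \<Rightarrow> ('p, 'a) fm \<Rightarrow> ('p, 'a) fm \<Rightarrow> ('p, 'a) fm set set" where
  "contr_eff \<Theta> a \<phi> \<psi> =
    (if \<not> pdl_ent \<Theta> (Imp \<phi> (Box a \<psi>)) then {\<Theta>}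
     else (let Em = Eminus \<Theta> a (Imp \<phi> (Box a \<psi>)) in
       {(\<Theta> - Em)
        \<union> {Imp (Conj \<phi>i (Neg (tauA t A))) (Box a \<psi>i) | \<phi>i \<psi>i. Imp \<phi>i (Box a \<psi>i) \<in> Em}
        \<union> {Imp (Conj \<phi>i (tauA t A)) (Box a (Disj \<psi>i (lits_conj t'))) | \<phi>i \<psi>i. Imp \<phi>i (Box a \<psi>i) \<in> Em}
        \<union> {Imp (Conj (tauA t A) (lit_fm l)) (Box a (Disj \<psi> (lit_fm l))) | l.
             l \<in> L \<and> (\<not> pdl_ent \<Theta> (Imp (Conj (tauA t A) (lit_fm l)) (Box a (Neg (lit_fm l))))
                      \<or> l \<in> t')}
       | t A t' L. t \<in> IP (Conj (BigConj (Stat \<Theta>)) \<phi>) \<and> A \<subseteq> UNIV - atm t \<and>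
              \<not> cpl_ent (Stat \<Theta>) (Neg (tauA t A)) \<and>
              t' \<in> IP (Conj (BigConj (Stat \<Theta>)) (Neg \<psi>)) \<and>
              cpl_ent (Stat \<Theta>) (Imp (tauA t A) (lits_conj L)) \<and>
              \<not> cpl_ent (Stat \<Theta>) (Neg (Conj (lits_conj t') (lits_conj L)))}))"

definition contr_stat ::
  "(('p, 'a) fm set \<Rightarrow> ('p, 'a) fm \<Rightarrow> ('p, 'a) fm set set) \<Rightarrow>
   ('p, 'a::finite) fm set \<Rightarrow> ('p, 'a) fm \<Rightarrow> ('p, 'a) fm set set" where
  "contr_stat cc \<Theta> \<phi> =
    (if \<not> cpl_ent (Stat \<Theta>) \<phi> then {\<Theta>}
     else {((\<Theta> - Stat \<Theta>) \<union> Sm) - (\<Union>a. Exe a \<Theta>)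
           \<union> {Imp (Conj \<phi>i \<phi>) (Dia a Top) | a \<phi>i. Imp \<phi>i (Dia a Top) \<in> Exe a \<Theta>}
           \<union> {Imp (Neg \<phi>) (Box a Bot) | a. True}
          | Sm. Sm \<in> cc (Stat \<Theta>) \<phi>})"

fun contr_modal :: "('p::finite, 'a) fm set \<Rightarrow> ('p, 'a) fm \<Rightarrow> ('p, 'a) fm set set" where
  "contr_modal \<Theta> (Imp \<phi> (Neg (Box a (Neg Top)))) = contr_exe \<Theta> a \<phi>"
| "contr_modal \<Theta> (Imp \<phi> (Box a \<psi>)) = contr_eff \<Theta> a \<phi> \<psi>"
| "contr_modal \<Theta> _ = {\<Theta>}"

definition contract ::
  "(('p, 'a) fm set \<Rightarrow> ('p, 'a) fm \<Rightarrow> ('p, 'a) fm set set) \<Rightarrow>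
   ('p::finite, 'a::finite) fm set \<Rightarrow> ('p, 'a) fm \<Rightarrow> ('p, 'a) fm set set" where
  "contract cc \<Theta> \<Phi> = (if is_bool \<Phi> then contr_stat cc \<Theta> \<Phi> else contr_modal \<Theta> \<Phi>)"

text \<open>Katsuno--Mendelzon-like semantics: for each finite set S of Boolean
formulas a faithful total preorder le S on valuations is given; contracting
\<phi> from S (when S |= \<phi>) adds exactly one \<le>_S-minimal countermodel of \<phi>.\<close>

definition faithful_preorder :: "('p, 'a) fm set \<Rightarrow> ('p valuation \<Rightarrow> 'p valuation \<Rightarrow> bool) \<Rightarrow> bool" where
  "faithful_preorder S le =
     ((\<forall>v. le v v) \<and> (\<forall>u v w. le u v \<longrightarrow> le v w \<longrightarrow> le u w) \<and> (\<forall>u v. le u v \<or> le v u) \<and>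
      (\<forall>u v. u \<in> cmodels S \<longrightarrow> v \<in> cmodels S \<longrightarrow> le u v \<and> le v u) \<and>
      (\<forall>u v. u \<in> cmodels S \<longrightarrow> v \<notin> cmodels S \<longrightarrow> le u v \<and> \<not> le v u))"

definition min_countermodel ::
  "('p valuation \<Rightarrow> 'p valuation \<Rightarrow> bool) \<Rightarrow> ('p, 'a) fm \<Rightarrow> 'p valuation \<Rightarrow> bool" where
  "min_countermodel le \<phi> v = (\<not> bsat v \<phi> \<and> (\<forall>u. \<not> bsat u \<phi> \<longrightarrow> le v u))"

definition classical_contraction ::
  "(('p, 'a) fm set \<Rightarrow> ('p, 'a) fm \<Rightarrow> ('p, 'a) fm set set) \<Rightarrow>
   (('p, 'a) fm set \<Rightarrow> 'p valuation \<Rightarrow> 'p valuation \<Rightarrow> bool) \<Rightarrow> bool" where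
  "classical_contraction cc le =
    (\<forall>S \<phi>. finite S \<and> (\<forall>g\<in>S. is_bool g) \<and> is_bool \<phi> \<and> cpl_ent S \<phi> \<longrightarrow>
       faithful_preorder S (le S) \<and>
       (\<forall>Sm\<in>cc S \<phi>. finite Sm \<and> (\<forall>g\<in>Sm. is_bool g) \<and> cpl_ent S (BigConj Sm) \<and>
          (\<exists>v. min_countermodel (le S) \<phi> v \<and> cmodels Sm = cmodels S \<union> {v})) \<and>
       (\<forall>v. min_countermodel (le S) \<phi> v \<longrightarrow>
          (\<exists>Sm\<in>cc S \<phi>. cmodels Sm = cmodels S \<union> {v})))"

end

theory Submission
  imports Defs
begin

text \<open>Every contraction weakens only some laws, by splitting on a formula that classically
entails the antecedent \<open>\<phi>\<close> of the contracted law \<open>\<Phi>\<close> (the term \<open>\<tau> \<and> \<phi>\<^sub>A\<close>, or \<open>\<phi>\<close> itself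
for static laws). Outside that case the weakened law coincides with the original one; inside it
\<open>\<Phi>\<close> fires and restores the original law: for executability laws directly, for effect laws
because the added disjunct \<open>\<tau>'\<close> entails \<open>\<not>\<psi>\<close> and so fails at every successor. For static laws
the classical contraction adds a single countermodel of \<open>\<phi>\<close>, which \<open>\<phi>\<close> excludes again.
The argument is local to one world.\<close>

lemma sat_bool_iff_bsat: "is_bool f \<Longrightarrow> sat M w f = bsat w f"
  by (induction f) (auto simp: bsat_def)

lemma is_bool_Conjs: "\<forall>f\<in>set fs. is_bool f \<Longrightarrow> is_bool (Conjs fs)"
  by (induction fs) auto

lemma is_bool_BigConj:
  assumes "finite F" "\<forall>f\<in>F. is_bool f"
  shows "is_bool (BigConj F)"
proof -
  have "set (SOME fs. set fs = F) = F"
    using finite_list[OF assms(1)] by (rule someI_ex)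
  then show ?thesis
    unfolding BigConj_def using assms(2) by (simp add: is_bool_Conjs)
qed

lemma is_bool_lits_conj: "finite L \<Longrightarrow> is_bool (lits_conj L)"
  unfolding lits_conj_def by (rule is_bool_BigConj) (auto simp: lit_fm_def)

lemma sat_IP_imp:
  fixes \<phi> :: "('p, 'a) fm"
  assumes "t \<in> IP (Conj \<chi> \<phi>)" "is_bool \<phi>" "sat M w (lits_conj t)"
  shows "sat M w \<phi>"
proof -
  have "is_bool (lits_conj t :: ('p, 'a) fm)"
    using assms(1) by (simp add: IP_def is_term_def is_bool_lits_conj)
  then have "bsat w (lits_conj t :: ('p, 'a) fm)"
    using assms(3) by (simp add: sat_bool_iff_bsat)
  with assms(1) have "bsat w (Conj \<chi> \<phi>)"
    by (simp add: IP_def implies_c_def cpl_ent_def cmodels_def)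
  then have "bsat w \<phi>"
    by (simp add: bsat_def)
  with assms(2) show ?thesis
    by (simp add: sat_bool_iff_bsat)
qed

lemma sat_tauA_imp:
  "t \<in> IP (Conj \<chi> \<phi>) \<Longrightarrow> is_bool \<phi> \<Longrightarrow> sat M w (tauA t A) \<Longrightarrow> sat M w \<phi>"
  by (auto simp: tauA_def intro: sat_IP_imp)

lemma pdl_ents_if_local:
  assumes "\<And>M w. (\<forall>g\<in>\<Sigma>. sat M w g) \<Longrightarrow> \<forall>f\<in>\<Theta>. sat M w f"
  shows "pdl_ents \<Sigma> \<Theta>"
  using assms by (fastforce simp: pdl_ents_def pdl_ent_def valid_in_def)

lemma sat_Imp_split:
  assumes "sat M w (Imp (Conj \<phi>' (Neg \<chi>)) \<gamma>)" "sat M w (Imp \<phi> \<gamma>)"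
    and "sat M w \<chi> \<Longrightarrow> sat M w \<phi>"
  shows "sat M w (Imp \<phi>' \<gamma>)"
  using assms by auto

lemma sat_Imp_Box_split:
  assumes "sat M w (Imp (Conj \<phi>' (Neg \<chi>)) (Box a \<psi>'))"
    and "sat M w (Imp (Conj \<phi>' \<chi>) (Box a (Disj \<psi>' \<theta>)))"
    and "sat M w (Imp \<phi> (Box a \<psi>))"
    and "sat M w \<chi> \<Longrightarrow> sat M w \<phi>"
    and "\<And>w'. sat M w' \<theta> \<Longrightarrow> \<not> sat M w' \<psi>"
  shows "sat M w (Imp \<phi>' (Box a \<psi>'))"
  using assms by auto

lemma contr_exe_recovery:
  assumes "is_bool \<phi>" "\<Theta>' \<in> contr_exe \<Theta> a \<phi>"
  shows "pdl_ents (\<Theta>' \<union> {Imp \<phi> (Dia a Top)}) \<Theta>"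
proof (cases "pdl_ent \<Theta> (Imp \<phi> (Dia a Top))")
  case False
  with assms(2) show ?thesis by (simp add: contr_exe_def pdl_ents_def pdl_ent_def)
next
  case True
  with assms(2) obtain t A where t: "t \<in> IP (Conj (BigConj (Stat \<Theta>)) \<phi>)"
    and \<Theta>': "\<Theta>' = (\<Theta> - Exe a \<Theta>) \<union>
      {Imp (Conj \<phi>' (Neg (tauA t A))) (Dia a Top) | \<phi>'. Imp \<phi>' (Dia a Top) \<in> Exe a \<Theta>}"
    by (auto simp: contr_exe_def)
  show ?thesis
  proof (rule pdl_ents_if_local, intro ballI)
    fix M w f
    assume sat: "\<forall>g\<in>\<Theta>' \<union> {Imp \<phi> (Dia a Top)}. sat M w g" and "f \<in> \<Theta>"
    show "sat M w f"
    proof (cases "f \<in> Exe a \<Theta>")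
      case True
      then obtain \<phi>' where f: "f = Imp \<phi>' (Dia a Top)" by (auto simp: Exe_def is_exec_def)
      have "sat M w (Imp (Conj \<phi>' (Neg (tauA t A))) (Dia a Top))"
        using sat \<Theta>' True f by blast
      then show ?thesis unfolding f
      proof (rule sat_Imp_split)
        show "sat M w (Imp \<phi> (Dia a Top))" using sat by blast
      qed (rule sat_tauA_imp[OF t assms(1)])
    qed (use \<Theta>' sat \<open>f \<in> \<Theta>\<close> in blast)
  qed
qed

lemma contr_eff_recovery:
  assumes "is_bool \<phi>" "is_bool \<psi>" "\<Theta>' \<in> contr_eff \<Theta> a \<phi> \<psi>"
  shows "pdl_ents (\<Theta>' \<union> {Imp \<phi> (Box a \<psi>)}) \<Theta>"
proof (cases "pdl_ent \<Theta> (Imp \<phi> (Box a \<psi>))")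
  case False
  with assms(3) show ?thesis by (simp add: contr_eff_def pdl_ents_def pdl_ent_def)
next
  case True
  define Em where "Em = Eminus \<Theta> a (Imp \<phi> (Box a \<psi>))"
  from assms(3) True obtain t A t' L where t: "t \<in> IP (Conj (BigConj (Stat \<Theta>)) \<phi>)"
    and t': "t' \<in> IP (Conj (BigConj (Stat \<Theta>)) (Neg \<psi>))"
    and \<Theta>': "\<Theta>' = (\<Theta> - Em)
        \<union> {Imp (Conj \<phi>' (Neg (tauA t A))) (Box a \<psi>') | \<phi>' \<psi>'. Imp \<phi>' (Box a \<psi>') \<in> Em}
        \<union> {Imp (Conj \<phi>' (tauA t A)) (Box a (Disj \<psi>' (lits_conj t'))) | \<phi>' \<psi>'. Imp \<phi>' (Box a \<psi>') \<in> Em}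
        \<union> {Imp (Conj (tauA t A) (lit_fm l)) (Box a (Disj \<psi> (lit_fm l))) | l.
             l \<in> L \<and> (\<not> pdl_ent \<Theta> (Imp (Conj (tauA t A) (lit_fm l)) (Box a (Neg (lit_fm l))))
                      \<or> l \<in> t')}"
    unfolding contr_eff_def Let_def Em_def by auto
  have "Em \<subseteq> Eff a \<Theta>" unfolding Em_def Eminus_def by blast
  show ?thesis
  proof (rule pdl_ents_if_local, intro ballI)
    fix M w f
    assume sat: "\<forall>g\<in>\<Theta>' \<union> {Imp \<phi> (Box a \<psi>)}. sat M w g" and "f \<in> \<Theta>"
    show "sat M w f"
    proof (cases "f \<in> Em")
      case True
      with \<open>Em \<subseteq> Eff a \<Theta>\<close> obtain \<phi>' \<psi>' where f: "f = Imp \<phi>' (Box a \<psi>')"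
        by (auto simp: Eff_def is_effect_def)
      show ?thesis unfolding f
      proof (rule sat_Imp_Box_split)
        show "sat M w (Imp (Conj \<phi>' (Neg (tauA t A))) (Box a \<psi>'))"
          and "sat M w (Imp (Conj \<phi>' (tauA t A)) (Box a (Disj \<psi>' (lits_conj t'))))"
          and "sat M w (Imp \<phi> (Box a \<psi>))"
          using sat \<Theta>' True f by blast+
        show "sat M w \<phi>" if "sat M w (tauA t A)"
          using sat_tauA_imp[OF t assms(1) that] .
        show "\<not> sat M w' \<psi>" if "sat M w' (lits_conj t')" for w'
          using sat_IP_imp[OF t' _ that] assms(2) by simp
      qed
    qed (use \<Theta>' sat \<open>f \<in> \<Theta>\<close> in blast)
  qed
qed

lemma classical_contraction_adds_countermodel:
  assumes "classical_contraction cc le" "finite S" "\<forall>g\<in>S. is_bool g" "is_bool \<phi>"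
    and "cpl_ent S \<phi>" "Sm \<in> cc S \<phi>"
  obtains v where "\<forall>g\<in>Sm. is_bool g" "\<not> bsat v \<phi>" "cmodels Sm = cmodels S \<union> {v}"
proof -
  have "\<forall>Sm\<in>cc S \<phi>. finite Sm \<and> (\<forall>g\<in>Sm. is_bool g) \<and> cpl_ent S (BigConj Sm) \<and>
          (\<exists>v. min_countermodel (le S) \<phi> v \<and> cmodels Sm = cmodels S \<union> {v})"
    using assms(1)[unfolded classical_contraction_def, THEN spec, of S, THEN spec, of \<phi>] assms(2-5)
    by blast
  then have "\<forall>g\<in>Sm. is_bool g" and "\<exists>v. min_countermodel (le S) \<phi> v \<and> cmodels Sm = cmodels S \<union> {v}"
    using assms(6) by simp_all
  moreover from this(2) obtain v where "min_countermodel (le S) \<phi> v" "cmodels Sm = cmodels S \<union> {v}"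
    by (elim exE conjE)
  ultimately show ?thesis
    by (intro that) (simp_all add: min_countermodel_def)
qed

lemma contr_stat_recovery:
  assumes cc: "classical_contraction cc le" and "action_theory \<Theta>" "is_bool \<phi>"
    and "\<Theta>' \<in> contr_stat cc \<Theta> \<phi>"
  shows "pdl_ents (\<Theta>' \<union> {\<phi>}) \<Theta>"
proof (cases "cpl_ent (Stat \<Theta>) \<phi>")
  case False
  with assms(4) show ?thesis by (simp add: contr_stat_def pdl_ents_def pdl_ent_def)
next
  case True
  with assms(4) obtain Sm where Sm: "Sm \<in> cc (Stat \<Theta>) \<phi>"
    and \<Theta>': "\<Theta>' = ((\<Theta> - Stat \<Theta>) \<union> Sm) - (\<Union>a. Exe a \<Theta>)
           \<union> {Imp (Conj \<phi>' \<phi>) (Dia a Top) | a \<phi>'. Imp \<phi>' (Dia a Top) \<in> Exe a \<Theta>}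
           \<union> {Imp (Neg \<phi>) (Box a Bot) | a. True}"
    by (auto simp: contr_stat_def)
  have "finite (Stat \<Theta>)" "\<forall>g\<in>Stat \<Theta>. is_bool g"
    using \<open>action_theory \<Theta>\<close> by (auto simp: action_theory_def Stat_def is_static_def)
  then obtain v where bool_Sm: "\<forall>g\<in>Sm. is_bool g" and "\<not> bsat v \<phi>"
    and models_Sm: "cmodels Sm = cmodels (Stat \<Theta>) \<union> {v}"
    using classical_contraction_adds_countermodel[OF cc _ _ \<open>is_bool \<phi>\<close> True Sm] by blast
  have "Sm \<subseteq> \<Theta>'"
    using \<Theta>' bool_Sm by (auto simp: Exe_def is_exec_def Dia_def)
  show ?thesis
  proof (rule pdl_ents_if_local, intro ballI)
    fix M w f
    assume sat: "\<forall>g\<in>\<Theta>' \<union> {\<phi>}. sat M w g" and "f \<in> \<Theta>"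
    then have "bsat w \<phi>"
      using \<open>is_bool \<phi>\<close> by (simp add: sat_bool_iff_bsat)
    consider "f \<in> Stat \<Theta>" | b where "f \<in> Exe b \<Theta>" | "f \<in> \<Theta>'"
      using \<open>f \<in> \<Theta>\<close> \<Theta>' by blast
    then show "sat M w f"
    proof cases
      case 1
      have "bsat w g" if "g \<in> Sm" for g
        using sat \<open>Sm \<subseteq> \<Theta>'\<close> bool_Sm that sat_bool_iff_bsat by blast
      then have "w \<in> cmodels Sm"
        by (simp add: cmodels_def)
      with \<open>bsat w \<phi>\<close> \<open>\<not> bsat v \<phi>\<close> have "w \<in> cmodels (Stat \<Theta>)"
        using models_Sm by auto
      with 1 show ?thesis
        by (simp add: cmodels_def Stat_def is_static_def sat_bool_iff_bsat)
    next
      case (2 b)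
      then obtain \<phi>' where f: "f = Imp \<phi>' (Dia b Top)"
        by (auto simp: Exe_def is_exec_def)
      with 2 have "Imp (Conj \<phi>' \<phi>) (Dia b Top) \<in> \<Theta>'"
        using \<Theta>' by blast
      with sat f show ?thesis by auto
    qed (use sat in blast)
  qed
qed

theorem theorem8:
  fixes \<Theta> :: "('p::finite, 'a::finite) fm set"
    and \<Phi> :: "('p, 'a) fm"
    and cc :: "('p, 'a) fm set \<Rightarrow> ('p, 'a) fm \<Rightarrow> ('p, 'a) fm set set"
    and le :: "('p, 'a) fm set \<Rightarrow> 'p set \<Rightarrow> 'p set \<Rightarrow> bool"
  assumes "classical_contraction cc le"
    and "action_theory \<Theta>"
    and "modular \<Theta>"
    and "is_law \<Phi>"
  shows "\<forall>\<Theta>' \<in> contract cc \<Theta> \<Phi>. pdl_ents (\<Theta>' \<union> {\<Phi>}) \<Theta>"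
proof
  fix \<Theta>' assume \<Theta>': "\<Theta>' \<in> contract cc \<Theta> \<Phi>"
  consider "is_bool \<Phi>"
    | a \<phi> \<psi> where "is_bool \<phi>" "is_bool \<psi>" "\<Phi> = Imp \<phi> (Box a \<psi>)"
    | a \<phi> where "is_bool \<phi>" "\<Phi> = Imp \<phi> (Dia a Top)"
    using \<open>is_law \<Phi>\<close> by (auto simp: is_law_def is_static_def is_effect_def is_exec_def)
  then show "pdl_ents (\<Theta>' \<union> {\<Phi>}) \<Theta>"
  proof cases
    case 1
    with \<Theta>' show ?thesis
      using contr_stat_recovery[OF assms(1,2)] by (simp add: contract_def)
  next
    case (2 a \<phi> \<psi>)
    with \<Theta>' show ?thesis
      using contr_eff_recovery by (simp add: contract_def)
  next
    case (3 a \<phi>)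
    with \<Theta>' show ?thesis
      using contr_exe_recovery by (simp add: contract_def Dia_def)
  qed
qed

end
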